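(* Under the standing assumptions, $G$ does not contain a vertex $v$ of degree $8$ together with pairwise distinct neighbours $x,t,w,y,z,u,r$ of $v$ and distinct vertices $p,q\notin\{v,x,t,w,y,z,u,r\}$ such that $xt,tw,wy,ur\in E(G)$, $p$ is adjacent to both $y$ and $z$, $q$ is adjacent to both $z$ and $u$, and $d(t)=d(y)=d(z)=d(u)=3$.
   Context: Standing assumptions: A total $9$-coloring of a graph is an assignment of colors from $\{1,\dots,9\}$ to the vertices and edges such that adjacent vertices, edges sharing an endpoint, and a vertex and an incident edge receive different colors. A $4$-fan is the graph on six vertices $c,u_1,\dots,u_5$ with edges $cu_j$ ($1\le j\le5$) and $u_ju_{j+1}$ ($1\le j\le4$). $G$ is a minimal counterexample: $G$ is a simple planar graph with maximum degree $8$, containing no subgraph isomorphic to a $4$-fan, that has no total $9$-coloring, and such that every simple planar graph $H$ with maximum degree at most $8$, no subgraph isomorphic to a $4$-fan, and $|V(H)|+|E(H)|<|V(G)|+|E(G)|$ has a total $9$-coloring. $d(\cdot)$ denotes degree in $G$. *)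

theory Defs
  imports "HOL-Analysis.Analysis"
begin

definition simple_graph :: "'a set \<Rightarrow> 'a set set \<Rightarrow> bool" where
  "simple_graph V E \<longleftrightarrow> finite V \<and> (\<forall>e\<in>E. \<exists>x y. x \<in> V \<and> y \<in> V \<and> x \<noteq> y \<and> e = {x, y})"

definition adj :: "'a set set \<Rightarrow> 'a \<Rightarrow> 'a \<Rightarrow> bool" where
  "adj E x y \<longleftrightarrow> {x, y} \<in> E"

definition degree :: "'a set set \<Rightarrow> 'a \<Rightarrow> nat" where
  "degree E v = card {e \<in> E. v \<in> e}"

definition max_degree_le :: "'a set \<Rightarrow> 'a set set \<Rightarrow> nat \<Rightarrow> bool" where
  "max_degree_le V E k \<longleftrightarrow> (\<forall>v\<in>V. degree E v \<le> k)"

definition max_degree_eq :: "'a set \<Rightarrow> 'a set set \<Rightarrow> nat \<Rightarrow> bool" where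
  "max_degree_eq V E k \<longleftrightarrow> max_degree_le V E k \<and> (\<exists>v\<in>V. degree E v = k)"

definition planar_embedding ::
  "'a set \<Rightarrow> 'a set set \<Rightarrow> ('a \<Rightarrow> complex) \<Rightarrow> ('a set \<Rightarrow> real \<Rightarrow> complex) \<Rightarrow> bool" where
  "planar_embedding V E pos arcs \<longleftrightarrow>
     inj_on pos V \<and>
     (\<forall>e\<in>E. \<exists>x y. e = {x, y} \<and> arc (arcs e) \<and>
              pathstart (arcs e) = pos x \<and> pathfinish (arcs e) = pos y) \<and>
     (\<forall>e\<in>E. \<forall>v\<in>V. pos v \<in> path_image (arcs e) \<longrightarrow> v \<in> e) \<and>
     (\<forall>e\<in>E. \<forall>e'\<in>E. e \<noteq> e' \<longrightarrow>
        path_image (arcs e) \<inter> path_image (arcs e') \<subseteq> pos ` (e \<inter> e'))"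

definition planar :: "'a set \<Rightarrow> 'a set set \<Rightarrow> bool" where
  "planar V E \<longleftrightarrow> (\<exists>pos arcs. planar_embedding V E pos arcs)"

definition total_coloring ::
  "'a set \<Rightarrow> 'a set set \<Rightarrow> nat \<Rightarrow> ('a \<Rightarrow> nat) \<Rightarrow> ('a set \<Rightarrow> nat) \<Rightarrow> bool" where
  "total_coloring V E k f g \<longleftrightarrow>
     (\<forall>v\<in>V. f v \<in> {1..k}) \<and> (\<forall>e\<in>E. g e \<in> {1..k}) \<and>
     (\<forall>x\<in>V. \<forall>y\<in>V. {x, y} \<in> E \<longrightarrow> f x \<noteq> f y) \<and>
     (\<forall>e\<in>E. \<forall>e'\<in>E. e \<noteq> e' \<and> e \<inter> e' \<noteq> {} \<longrightarrow> g e \<noteq> g e') \<and>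
     (\<forall>v\<in>V. \<forall>e\<in>E. v \<in> e \<longrightarrow> f v \<noteq> g e)"

definition total_colorable :: "'a set \<Rightarrow> 'a set set \<Rightarrow> nat \<Rightarrow> bool" where
  "total_colorable V E k \<longleftrightarrow> (\<exists>f g. total_coloring V E k f g)"

definition has_4fan :: "'a set \<Rightarrow> 'a set set \<Rightarrow> bool" where
  "has_4fan V E \<longleftrightarrow> (\<exists>c u1 u2 u3 u4 u5.
     distinct [c, u1, u2, u3, u4, u5] \<and> set [c, u1, u2, u3, u4, u5] \<subseteq> V \<and>
     adj E c u1 \<and> adj E c u2 \<and> adj E c u3 \<and> adj E c u4 \<and> adj E c u5 \<and>
     adj E u1 u2 \<and> adj E u2 u3 \<and> adj E u3 u4 \<and> adj E u4 u5)"

text \<open>Smaller graphs H range over graphs with vertices in nat;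
  since total colourability, planarity etc. are isomorphism invariant and all graphs
  are finite, this covers all smaller graphs.\<close>
definition minimal_counterexample :: "'a set \<Rightarrow> 'a set set \<Rightarrow> bool" where
  "minimal_counterexample V E \<longleftrightarrow>
     simple_graph V E \<and> planar V E \<and> max_degree_eq V E 8 \<and> \<not> has_4fan V E \<and>
     \<not> total_colorable V E 9 \<and>
     (\<forall>(VH :: nat set) EH. simple_graph VH EH \<and> planar VH EH \<and> max_degree_le VH EH 8 \<and>
        \<not> has_4fan VH EH \<and> card VH + card EH < card V + card E \<longrightarrow> total_colorable VH EH 9)"

end

theory Submission
  imports Defs
begin

(* Delete the edge vz.  By minimality the rest has a total 9-colouring; uncolour the four
   vertices t, y, z, u of degree 3.  They can be recoloured at the very end, since a vertex
   of degree 3 sees at most six colours.  The seven remaining edges at v together with v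
   itself use eight colours, so some colour \<alpha> is missing at v, and vz can simply be
   coloured \<alpha> unless \<alpha> already appears at z.  The remaining cases are settled by
   recolouring edges of the paths x-t-w-y-p-z-q-u-r around v: at the coloured vertices
   x, w, p, q, r the colours of the recoloured edges are only permuted, so nothing outside
   the configuration has to change, and a finite case analysis shows that one of seventeen
   such recolourings always works. *)

section \<open>Graphs\<close>

definition incident :: "'a set set \<Rightarrow> 'a \<Rightarrow> 'a set set" where
  "incident E c = {e \<in> E. c \<in> e}"

lemma degree_eq_card_incident: "degree E c = card (incident E c)"
  by (simp add: degree_def incident_def)

lemma incident_Diff_edge: "c \<notin> e \<Longrightarrow> incident (E - {e}) c = incident E c"
  by (auto simp: incident_def)

lemma simple_graph_edges_subset: "simple_graph V E \<Longrightarrow> E \<subseteq> Pow V"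
  by (auto simp: simple_graph_def)

lemma simple_graph_finite_edges: "simple_graph V E \<Longrightarrow> finite E"
  by (meson finite_Pow_iff finite_subset simple_graph_def simple_graph_edges_subset)

lemma simple_graph_edgeD: "simple_graph V E \<Longrightarrow> {a, b} \<in> E \<Longrightarrow> a \<noteq> b \<and> a \<in> V \<and> b \<in> V"
  unfolding simple_graph_def by (metis doubleton_eq_iff insert_absorb2)

lemma simple_graph_mono: "simple_graph V E \<Longrightarrow> E' \<subseteq> E \<Longrightarrow> simple_graph V E'"
  unfolding simple_graph_def by (meson subsetD)

lemma card_neighbours_le_degree:
  assumes "simple_graph V E"
  shows "card {b. {a, b} \<in> E} \<le> degree E a"
proof -
  have "inj_on (\<lambda>b. {a, b}) {b. {a, b} \<in> E}" by (auto intro!: inj_onI simp: doubleton_eq_iff)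
  moreover have "(\<lambda>b. {a, b}) ` {b. {a, b} \<in> E} \<subseteq> incident E a" by (auto simp: incident_def)
  moreover have "finite (incident E a)"
    using simple_graph_finite_edges[OF assms] by (simp add: incident_def)
  ultimately show ?thesis by (simp add: card_inj_on_le degree_eq_card_incident)
qed

lemma incident_eq_if_card_eq:
  assumes "finite E" and "A \<subseteq> incident E c" and "degree E c = card A"
  shows "incident E c = A"
  using card_subset_eq[of "incident E c" A] assms by (simp add: incident_def degree_eq_card_incident)

lemma incident_eq_insert_edge:
  assumes sg: "simple_graph V E" and "A \<subseteq> incident E c" and "degree E c = Suc (card A)"
  shows "\<exists>s\<in>V. s \<noteq> c \<and> {c, s} \<notin> A \<and> incident E c = insert {c, s} A"
proof -
  have "finite (incident E c)"
    using simple_graph_finite_edges[OF sg] by (simp add: incident_def)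
  then have "card (incident E c - A) = 1"
    using card_Diff_subset[OF finite_subset[OF assms(2)] assms(2)] assms(3)
    by (simp add: degree_eq_card_incident)
  then obtain e where e: "incident E c - A = {e}" by (rule card_1_singletonE)
  then have "e \<in> E" "c \<in> e" "e \<notin> A" by (auto simp: incident_def)
  obtain a b where ab: "a \<in> V" "b \<in> V" "a \<noteq> b" "e = {a, b}"
    using sg \<open>e \<in> E\<close> by (auto simp: simple_graph_def)
  have "\<exists>s\<in>V. s \<noteq> c \<and> e = {c, s}"
  proof (cases "c = a")
    case True
    then show ?thesis using ab by (intro bexI[of _ b]) auto
  next
    case False
    then have "c = b" using \<open>c \<in> e\<close> ab(4) by blast
    then show ?thesis using ab by (intro bexI[of _ a]) (auto simp: insert_commute)
  qed
  moreover have "incident E c = insert e A" using e assms(2) by blast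
  ultimately show ?thesis using \<open>e \<notin> A\<close> by blast
qed

lemma planar_embeddingD:
  assumes "planar_embedding V E pos arcs"
  shows "inj_on pos V"
    and "\<forall>e\<in>E. \<exists>a b. e = {a, b} \<and> arc (arcs e) \<and> pathstart (arcs e) = pos a \<and> pathfinish (arcs e) = pos b"
    and "\<forall>e\<in>E. \<forall>a\<in>V. pos a \<in> path_image (arcs e) \<longrightarrow> a \<in> e"
    and "\<forall>e\<in>E. \<forall>e'\<in>E. e \<noteq> e' \<longrightarrow> path_image (arcs e) \<inter> path_image (arcs e') \<subseteq> pos ` (e \<inter> e')"
  using assms by (simp_all add: planar_embedding_def)

lemma planar_mono:
  assumes "planar V E" and "E' \<subseteq> E"
  shows "planar V E'"
proof -
  obtain pos arcs where pe: "planar_embedding V E pos arcs" using assms(1) by (auto simp: planar_def)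
  note emb = planar_embeddingD[OF pe]
  have "planar_embedding V E' pos arcs"
    unfolding planar_embedding_def
  proof (intro conjI ballI impI)
    fix e assume "e \<in> E'"
    then show "\<exists>a b. e = {a, b} \<and> arc (arcs e) \<and> pathstart (arcs e) = pos a \<and> pathfinish (arcs e) = pos b"
      using emb(2) assms(2) by blast
  next
    fix e a assume "e \<in> E'" "a \<in> V" "pos a \<in> path_image (arcs e)"
    then show "a \<in> e" using emb(3) assms(2) by blast
  next
    fix e e' assume "e \<in> E'" "e' \<in> E'" "e \<noteq> e'"
    then show "path_image (arcs e) \<inter> path_image (arcs e') \<subseteq> pos ` (e \<inter> e')"
      using emb(4) assms(2) by blast
  qed (rule emb(1))
  then show ?thesis by (auto simp: planar_def)
qed

lemma max_degree_le_mono: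
  assumes "simple_graph V E" and "max_degree_le V E k" and "E' \<subseteq> E"
  shows "max_degree_le V E' k"
  unfolding max_degree_le_def
proof
  fix a assume "a \<in> V"
  have "degree E' a \<le> degree E a"
    unfolding degree_def using assms(3) simple_graph_finite_edges[OF assms(1)] by (intro card_mono) auto
  then show "degree E' a \<le> k" using assms(2) \<open>a \<in> V\<close> by (auto simp: max_degree_le_def)
qed

lemma has_4fan_mono:
  assumes "has_4fan V E'" and "E' \<subseteq> E"
  shows "has_4fan V E"
proof -
  have adj: "adj E a b" if "adj E' a b" for a b using that assms(2) by (auto simp: adj_def)
  from assms(1) show ?thesis
    unfolding has_4fan_def by (elim exE conjE) (intro exI conjI adj; assumption)
qed

section \<open>Transport along an injection\<close>

lemma image_inv_into_image_edges:
  assumes "inj_on h V" and "E \<subseteq> Pow V"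
  shows "(`) (inv_into V h) ` (`) h ` E = E"
proof -
  have "inv_into V h ` h ` e = e" if "e \<in> E" for e
    using inv_into_image_cancel[OF assms(1)] assms(2) that by blast
  then show ?thesis by (simp add: image_comp comp_def)
qed

lemma simple_graph_image:
  assumes "simple_graph V E" and "inj_on h V"
  shows "simple_graph (h ` V) ((`) h ` E)"
  unfolding simple_graph_def
proof (intro conjI ballI)
  show "finite (h ` V)" using assms(1) by (simp add: simple_graph_def)
next
  fix e assume "e \<in> (`) h ` E"
  then obtain a b where "a \<in> V" "b \<in> V" "a \<noteq> b" "e = {h a, h b}"
    using assms(1) by (auto simp: simple_graph_def)
  moreover from this have "h a \<noteq> h b" using assms(2) by (auto simp: inj_on_def)
  ultimately show "\<exists>a b. a \<in> h ` V \<and> b \<in> h ` V \<and> a \<noteq> b \<and> e = {a, b}" by blast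
qed

lemma inj_on_image_edges:
  assumes "simple_graph V E" and "inj_on h V"
  shows "inj_on ((`) h) E"
  using inj_on_subset[OF inj_on_image_Pow[OF assms(2)] simple_graph_edges_subset[OF assms(1)]] .

lemma degree_image:
  assumes "simple_graph V E" and "inj_on h V" and "a \<in> V"
  shows "degree ((`) h ` E) (h a) = degree E a"
proof -
  have "h a \<in> h ` e \<longleftrightarrow> a \<in> e" if "e \<in> E" for e
    using inj_on_image_mem_iff[OF assms(2) assms(3)] simple_graph_edges_subset[OF assms(1)] that by blast
  then have "{e \<in> (`) h ` E. h a \<in> e} = (`) h ` {e \<in> E. a \<in> e}" by auto
  moreover have "inj_on ((`) h) {e \<in> E. a \<in> e}"
    using inj_on_image_edges[OF assms(1,2)] by (rule inj_on_subset) blast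
  ultimately show ?thesis unfolding degree_def by (simp add: card_image)
qed

lemma max_degree_le_image:
  assumes "simple_graph V E" and "inj_on h V" and "max_degree_le V E k"
  shows "max_degree_le (h ` V) ((`) h ` E) k"
  using assms degree_image[OF assms(1,2)] by (auto simp: max_degree_le_def)

lemma has_4fan_image:
  assumes "has_4fan V E" and "inj_on h V"
  shows "has_4fan (h ` V) ((`) h ` E)"
proof -
  have adj: "adj ((`) h ` E) (h a) (h b)" if "adj E a b" for a b
    using that unfolding adj_def by (metis image_empty image_eqI image_insert)
  obtain c u1 u2 u3 u4 u5 where F: "distinct [c, u1, u2, u3, u4, u5]" "set [c, u1, u2, u3, u4, u5] \<subseteq> V"
     "adj E c u1" "adj E c u2" "adj E c u3" "adj E c u4" "adj E c u5"
     "adj E u1 u2" "adj E u2 u3" "adj E u3 u4" "adj E u4 u5"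
    using assms(1) unfolding has_4fan_def by blast
  have "distinct (map h [c, u1, u2, u3, u4, u5])"
    using F(1,2) assms(2) by (simp only: distinct_map) (meson inj_on_subset)
  moreover have "set (map h [c, u1, u2, u3, u4, u5]) \<subseteq> h ` V"
    using F(2) by (simp only: set_map image_mono)
  ultimately show ?thesis
    unfolding has_4fan_def list.map
    using adj[OF F(3)] adj[OF F(4)] adj[OF F(5)] adj[OF F(6)] adj[OF F(7)]
      adj[OF F(8)] adj[OF F(9)] adj[OF F(10)] adj[OF F(11)]
    by (intro exI conjI) assumption+
qed

lemma has_4fan_image_iff:
  assumes "simple_graph V E" and "inj_on h V"
  shows "has_4fan (h ` V) ((`) h ` E) \<longleftrightarrow> has_4fan V E"
proof
  assume "has_4fan (h ` V) ((`) h ` E)"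
  then have "has_4fan (inv_into V h ` h ` V) ((`) (inv_into V h) ` (`) h ` E)"
    using has_4fan_image inj_on_inv_into by blast
  then show "has_4fan V E"
    using image_inv_into_image_edges[OF assms(2) simple_graph_edges_subset[OF assms(1)]]
      inv_into_image_cancel[OF assms(2)] by simp
qed (rule has_4fan_image[OF _ assms(2)])

lemma planar_image:
  assumes "simple_graph V E" and "planar V E" and "inj_on h V"
  shows "planar (h ` V) ((`) h ` E)"
proof -
  obtain pos arcs where pe: "planar_embedding V E pos arcs" using assms(2) by (auto simp: planar_def)
  define i where "i = inv_into V h"
  have EP: "E \<subseteq> Pow V" using assms(1) by (rule simple_graph_edges_subset)
  have ih: "h (i a) = a" "i a \<in> V" if "a \<in> h ` V" for a
    using that unfolding i_def by (simp_all add: f_inv_into_f inv_into_into)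
  note emb = planar_embeddingD[OF pe]
  have ie: "i ` h ` e = e" if "e \<in> E" for e
    using inv_into_image_cancel[OF assms(3)] EP that unfolding i_def by blast
  have "planar_embedding (h ` V) ((`) h ` E) (pos \<circ> i) (\<lambda>e. arcs (i ` e))"
    unfolding planar_embedding_def
  proof (intro conjI ballI impI)
    show "inj_on (pos \<circ> i) (h ` V)"
      using emb(1) ih unfolding inj_on_def by (metis comp_apply)
  next
    fix e assume "e \<in> (`) h ` E"
    then obtain e0 where e0: "e0 \<in> E" "e = h ` e0" by auto
    then obtain a b where ab: "e0 = {a, b}" "arc (arcs e0)" "pathstart (arcs e0) = pos a"
        "pathfinish (arcs e0) = pos b"
      using emb(2) by blast
    have "a \<in> V" "b \<in> V" using EP e0 ab by auto
    then show "\<exists>a b. e = {a, b} \<and> arc (arcs (i ` e)) \<and> pathstart (arcs (i ` e)) = (pos \<circ> i) a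
        \<and> pathfinish (arcs (i ` e)) = (pos \<circ> i) b"
      using e0 ab ie[OF e0(1)] assms(3) by (intro exI[of _ "h a"] exI[of _ "h b"]) (simp add: i_def)
  next
    fix e a assume ea: "e \<in> (`) h ` E" "a \<in> h ` V" "(pos \<circ> i) a \<in> path_image (arcs (i ` e))"
    then obtain e0 where e0: "e0 \<in> E" "e = h ` e0" by auto
    have "pos (i a) \<in> path_image (arcs e0)" using ea e0 ie[OF e0(1)] by simp
    then have "i a \<in> e0" using emb(3) e0(1) ih[OF ea(2)] by blast
    then show "a \<in> e" using e0 ih[OF ea(2)] by (metis image_eqI)
  next
    fix e e' assume ee: "e \<in> (`) h ` E" "e' \<in> (`) h ` E" "e \<noteq> e'"
    then obtain e0 e0' where e0: "e0 \<in> E" "e = h ` e0" "e0' \<in> E" "e' = h ` e0'" by auto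
    have "e0 \<noteq> e0'" using ee e0 by auto
    then have "path_image (arcs e0) \<inter> path_image (arcs e0') \<subseteq> pos ` (e0 \<inter> e0')"
      using emb(4) e0 by blast
    moreover have "h ` (e0 \<inter> e0') = e \<inter> e'"
      using e0 EP assms(3) by (simp add: inj_on_image_Int subset_iff)
    then have "e0 \<inter> e0' = i ` (e \<inter> e')"
      using inv_into_image_cancel[OF assms(3)] EP e0 unfolding i_def by (metis Int_lower1 PowD order_trans subsetD)
    ultimately show "path_image (arcs (i ` e)) \<inter> path_image (arcs (i ` e')) \<subseteq> (pos \<circ> i) ` (e \<inter> e')"
      using ie e0 by (simp add: image_comp)
  qed
  then show ?thesis by (auto simp: planar_def)
qed

lemma total_colorable_preimage:
  assumes "simple_graph V E" and "inj_on h V" and "total_colorable (h ` V) ((`) h ` E) k"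
  shows "total_colorable V E k"
proof -
  obtain f g where fg: "total_coloring (h ` V) ((`) h ` E) k f g"
    using assms(3) by (auto simp: total_colorable_def)
  have "total_coloring V E k (f \<circ> h) (g \<circ> (`) h)"
    unfolding total_coloring_def
  proof (intro conjI ballI impI)
    fix a assume "a \<in> V"
    then show "(f \<circ> h) a \<in> {1..k}" using fg by (auto simp: total_coloring_def)
  next
    fix e assume "e \<in> E"
    then show "(g \<circ> (`) h) e \<in> {1..k}" using fg by (auto simp: total_coloring_def)
  next
    fix a b assume "a \<in> V" "b \<in> V" "{a, b} \<in> E"
    moreover have "h ` {a, b} = {h a, h b}" by simp
    ultimately show "(f \<circ> h) a \<noteq> (f \<circ> h) b"
      using fg unfolding total_coloring_def by (metis comp_apply image_eqI)
  next
    fix e e' assume ee: "e \<in> E" "e' \<in> E" "e \<noteq> e' \<and> e \<inter> e' \<noteq> {}"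
    have "h ` e \<noteq> h ` e'" using inj_on_image_edges[OF assms(1,2)] ee by (auto simp: inj_on_def)
    moreover have "h ` e \<inter> h ` e' \<noteq> {}" using ee by auto
    ultimately show "(g \<circ> (`) h) e \<noteq> (g \<circ> (`) h) e'" using fg ee unfolding total_coloring_def by auto
  next
    fix a e assume "a \<in> V" "e \<in> E" "a \<in> e"
    then show "(f \<circ> h) a \<noteq> (g \<circ> (`) h) e" using fg unfolding total_coloring_def by auto
  qed
  then show ?thesis by (auto simp: total_colorable_def)
qed

(* Minimality only speaks about graphs on nat, so the subgraph is first transported
   along an injection of V into nat. *)
lemma minimal_counterexample_subgraph_colorable:
  assumes mc: "minimal_counterexample V E" and "E' \<subseteq> E" and "E' \<noteq> E"
  shows "total_colorable V E' 9"
proof -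
  have sg: "simple_graph V E" and pl: "planar V E" and md: "max_degree_le V E 8"
    and nf: "\<not> has_4fan V E"
    using mc by (auto simp: minimal_counterexample_def max_degree_eq_def)
  have sg': "simple_graph V E'" using simple_graph_mono[OF sg assms(2)] .
  obtain h :: "'a \<Rightarrow> nat" where h: "inj_on h V"
    using finite_imp_inj_to_nat_seg[of V] sg by (auto simp: simple_graph_def)
  have "card E' < card E"
    using psubset_card_mono[OF simple_graph_finite_edges[OF sg]] assms(2,3) by blast
  moreover have "card (h ` V) = card V" and "card ((`) h ` E') = card E'"
    using card_image h inj_on_image_edges[OF sg' h] by auto
  moreover have "\<not> has_4fan (h ` V) ((`) h ` E')"
    using has_4fan_image_iff[OF sg' h] has_4fan_mono[OF _ assms(2)] nf by blast
  ultimately have "total_colorable (h ` V) ((`) h ` E') 9"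
    using mc simple_graph_image[OF sg' h] planar_image[OF sg' planar_mono[OF pl assms(2)] h]
      max_degree_le_image[OF sg' h max_degree_le_mono[OF sg md assms(2)]]
    unfolding minimal_counterexample_def by auto
  then show ?thesis by (rule total_colorable_preimage[OF sg' h])
qed

section \<open>Partial total colourings\<close>

lemma exists_colour_not_in:
  fixes S :: "nat set"
  assumes "finite S" and "card S < k"
  shows "\<exists>c\<in>{1..k}. c \<notin> S"
proof (rule ccontr)
  assume "\<not> ?thesis"
  then have "card {1..k} \<le> card S" using assms(1) by (intro card_mono) auto
  then show False using assms(2) by simp
qed

definition total_coloring_except ::
  "'a set \<Rightarrow> 'a set set \<Rightarrow> 'a set \<Rightarrow> nat \<Rightarrow> ('a \<Rightarrow> nat) \<Rightarrow> ('a set \<Rightarrow> nat) \<Rightarrow> bool" where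
  "total_coloring_except V E U k f g \<longleftrightarrow>
     (\<forall>a\<in>V - U. f a \<in> {1..k}) \<and> (\<forall>e\<in>E. g e \<in> {1..k}) \<and>
     (\<forall>a\<in>V - U. \<forall>b\<in>V - U. {a, b} \<in> E \<longrightarrow> f a \<noteq> f b) \<and>
     (\<forall>c\<in>V. inj_on g (incident E c)) \<and> (\<forall>c\<in>V - U. f c \<notin> g ` incident E c)"

lemma total_coloring_iff_except_empty:
  assumes "simple_graph V E"
  shows "total_coloring V E k f g \<longleftrightarrow> total_coloring_except V E {} k f g"
proof
  assume col: "total_coloring V E k f g"
  show "total_coloring_except V E {} k f g"
    unfolding total_coloring_except_def
  proof (intro conjI ballI)
    fix c
    show "inj_on g (incident E c)"
    proof (rule inj_onI, rule ccontr)
      fix e e' assume "e \<in> incident E c" "e' \<in> incident E c" "g e = g e'" "e \<noteq> e'"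
      then show False using col unfolding total_coloring_def incident_def by blast
    qed
  qed (use col in \<open>auto simp: total_coloring_def incident_def\<close>)
next
  assume col: "total_coloring_except V E {} k f g"
  show "total_coloring V E k f g"
    unfolding total_coloring_def
  proof (intro conjI ballI impI)
    fix e e' assume ee: "e \<in> E" "e' \<in> E" "e \<noteq> e' \<and> e \<inter> e' \<noteq> {}"
    then obtain c where "c \<in> e" "c \<in> e'" by blast
    moreover from this have "c \<in> V" using simple_graph_edges_subset[OF assms] ee by blast
    ultimately show "g e \<noteq> g e'"
      using col ee unfolding total_coloring_except_def incident_def inj_on_def by blast
  qed (use col in \<open>auto simp: total_coloring_except_def incident_def\<close>)
qed

lemma total_coloring_except_colour_vertex:
  assumes sg: "simple_graph V E" and "a \<in> V" and "2 * degree E a < k"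
    and col: "total_coloring_except V E (insert a U) k f g"
  shows "\<exists>c. total_coloring_except V E U k (f(a := c)) g"
proof -
  define N where "N = {b. {a, b} \<in> E}"
  have "N \<subseteq> V" using simple_graph_edgeD[OF sg] by (auto simp: N_def)
  then have finN: "finite N" using sg finite_subset by (auto simp: simple_graph_def)
  have finI: "finite (incident E a)"
    using simple_graph_finite_edges[OF sg] by (simp add: incident_def)
  have "card (f ` N \<union> g ` incident E a) \<le> card N + card (incident E a)"
    by (meson add_mono card_Un_le card_image_le finI finN le_trans)
  also have "\<dots> \<le> 2 * degree E a"
    using card_neighbours_le_degree[OF sg] by (simp add: N_def degree_eq_card_incident)
  finally obtain c where c: "c \<in> {1..k}" "c \<notin> f ` N \<union> g ` incident E a"
    using exists_colour_not_in[of "f ` N \<union> g ` incident E a" k] assms(3) finI finN by auto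
  have no_loop: "b \<noteq> a" if "{a, b} \<in> E" for b using simple_graph_edgeD[OF sg that] by auto
  have "total_coloring_except V E U k (f(a := c)) g"
    unfolding total_coloring_except_def
  proof (intro conjI ballI impI)
    fix b1 b2 assume b: "b1 \<in> V - U" "b2 \<in> V - U" "{b1, b2} \<in> E"
    show "(f(a := c)) b1 \<noteq> (f(a := c)) b2"
    proof (cases "b1 = a \<or> b2 = a")
      case True
      with b no_loop c show ?thesis by (auto simp: N_def insert_commute)
    next
      case False
      with b col show ?thesis by (auto simp: total_coloring_except_def)
    qed
  qed (use col c in \<open>auto simp: total_coloring_except_def\<close>)
  then show ?thesis by blast
qed

lemma total_coloring_except_colour_vertices:
  assumes "simple_graph V E" and "finite U" and "U \<subseteq> V" and "\<forall>a\<in>U. 2 * degree E a < k"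
    and "total_coloring_except V E U k f g"
  shows "\<exists>f'. total_coloring_except V E {} k f' g"
  using assms(2-5)
proof (induction U arbitrary: f rule: finite_induct)
  case empty
  then show ?case by blast
next
  case (insert a U)
  then obtain c where "total_coloring_except V E U k (f(a := c)) g"
    using total_coloring_except_colour_vertex[OF assms(1)] by (meson insert_subset insertI1)
  with insert show ?case by blast
qed

lemma inj_on_if_distinct_map: "distinct (map g es) \<Longrightarrow> inj_on g (set es)"
  by (simp add: distinct_map)

lemma inj_on_if_image_eq:
  assumes "finite A" and "inj_on g A" and "g' ` A = g ` A"
  shows "inj_on g' A"
  using assms by (metis card_image eq_card_imp_inj_on)

lemma image_eq_if_eq_outside:
  assumes "\<forall>e\<in>A - D. g' e = g e" and "g' ` (A \<inter> D) = g ` (A \<inter> D)"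
  shows "g' ` A = g ` A"
proof -
  have "A = (A - D) \<union> (A \<inter> D)" by blast
  then show ?thesis using assms by (metis image_Un image_cong)
qed

section \<open>Recolouring the edges around the degree-8 vertex\<close>

(* The colour \<alpha> is missing at v.  Lower-case names are the old colours of the edges
   (vx is the colour of {v, x}, fv that of v), upper-case ones the new colours.  Each
   disjunct below is an explicit recolouring: the first gives vz the colour \<alpha>, the
   others shift colours along the paths x-t-w-y-p-z-q-u-r around v. *)
lemma recolouring_at_degree_8_vertex:
  fixes \<alpha> fv vx vt vw vy vu vr vs tx tw yw yp zp zq uq ur :: 'c
  assumes "distinct [\<alpha>, fv, vx, vt, vw, vy, vu, vr, vs]"
    and "vx \<noteq> tx" "distinct [vt, tx, tw]" "distinct [vw, tw, yw]" "distinct [vy, yw, yp]"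
    and "yp \<noteq> zp" "zp \<noteq> zq" "zq \<noteq> uq" "distinct [vu, uq, ur]" "vr \<noteq> ur"
  shows "\<exists>Vx Vt Vw Vy Vz Vu Vr Tx Tw Yw Yp Zp Zq Uq Ur.
    distinct [fv, vs, Vx, Vt, Vw, Vy, Vz, Vu, Vr] \<and> distinct [Vt, Tx, Tw] \<and> distinct [Vy, Yw, Yp] \<and>
    distinct [Vz, Zp, Zq] \<and> distinct [Vu, Uq, Ur] \<and>
    {Vx, Tx} = {vx, tx} \<and> {Vw, Tw, Yw} = {vw, tw, yw} \<and> {Yp, Zp} = {yp, zp} \<and> {Zq, Uq} = {zq, uq} \<and>
    {Vr, Ur} = {vr, ur} \<and> {Vt, Vy, Vz, Vu} \<subseteq> {\<alpha>, vx, vt, vw, vy, vu, vr}"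
    (is "\<exists>Vx Vt Vw Vy Vz Vu Vr Tx Tw Yw Yp Zp Zq Uq Ur. ?ok Vx Vt Vw Vy Vz Vu Vr Tx Tw Yw Yp Zp Zq Uq Ur")
proof -
  have "?ok vx vt vw vy \<alpha> vu vr tx tw yw yp zp zq uq ur \<or>
      ?ok vx \<alpha> vw vy vt vu vr tx tw yw yp zp zq uq ur \<or>
      ?ok vx vt vw \<alpha> vy vu vr tx tw yw yp zp zq uq ur \<or>
      ?ok vx vt vw vy \<alpha> vu vr tx tw yw yp zp uq zq ur \<or>
      ?ok vx vt vw vy vu \<alpha> vr tx tw yw yp zp zq uq ur \<or>
      ?ok tx vt vw vy vx vu vr vx tw yw yp zp zq uq ur \<or>
      ?ok vx \<alpha> vw vt vy vu vr tx tw yw yp zp zq uq ur \<or>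
      ?ok vx vt yw vy vw vu vr tx tw vw yp zp zq uq ur \<or>
      ?ok vx vt tw vy vw vu vr tx vw yw yp zp zq uq ur \<or>
      ?ok vx vy vw \<alpha> vt vu vr tx tw yw yp zp zq uq ur \<or>
      ?ok vx vt vw vy vr vu ur tx tw yw yp zp zq uq vr \<or>
      ?ok vx vt tw vy vw vu vr tx yw vw yp zp zq uq ur \<or>
      ?ok vx vt tw vw vy vu vr tx vw yw yp zp zq uq ur \<or>
      ?ok tx vt vw vy vx vu vr vx yw tw yp zp zq uq ur \<or>
      ?ok vx vt yw vw vy vu vr tx vw tw zp yp zq uq ur \<or>
      ?ok vx vt vw vr vu vy ur tx tw yw yp zp uq zq vr \<or>
      ?ok vx vr vw vy vt vu ur tx tw yw zp yp uq zq vr"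
    using assms
    by (simp only: insert_commute insert_absorb2 insert_subset insert_iff simp_thms empty_subsetI
        distinct.simps list.set empty_iff de_Morgan_disj) (smt (z3))
  then show ?thesis by (elim disjE) (intro exI, assumption)+
qed

section \<open>The reducible configuration\<close>

(* The eighth neighbour s of v may coincide with p or q. *)
locale configuration =
  fixes V :: "'a set" and E :: "'a set set" and v x t w y z u r p q s :: 'a
  assumes simple: "simple_graph V E"
    and distinct: "distinct [v, x, t, w, y, z, u, r]"
    and outside: "p \<notin> {v, x, t, w, y, z, u, r}" "q \<notin> {v, x, t, w, y, z, u, r}"
      "s \<notin> {v, x, t, w, y, z, u, r}" "p \<noteq> q"
    and incident_v: "incident E v = {{v, s}, {v, x}, {v, t}, {v, w}, {v, y}, {v, z}, {v, u}, {v, r}}"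
    and incident_t: "incident E t = {{v, t}, {x, t}, {t, w}}"
    and incident_y: "incident E y = {{v, y}, {w, y}, {p, y}}"
    and incident_z: "incident E z = {{v, z}, {p, z}, {q, z}}"
    and incident_u: "incident E u = {{v, u}, {q, u}, {u, r}}"
begin

definition recoloured_edges :: "'a set set" where
  "recoloured_edges = {{v, x}, {v, t}, {v, w}, {v, y}, {v, z}, {v, u}, {v, r},
     {x, t}, {t, w}, {w, y}, {p, y}, {p, z}, {q, z}, {q, u}, {u, r}}"

lemma configuration_edges: "insert {v, s} recoloured_edges \<subseteq> E"
proof -
  have "incident E v \<union> incident E t \<union> incident E y \<union> incident E z \<union> incident E u \<subseteq> E"
    by (auto simp: incident_def)
  then show ?thesis
    unfolding recoloured_edges_def incident_v incident_t incident_y incident_z incident_u by simp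
qed

lemma configuration_vertices: "{v, x, t, w, y, z, u, r, p, q, s} \<subseteq> V"
proof -
  have "{v, x} \<in> E" "{v, t} \<in> E" "{v, w} \<in> E" "{v, y} \<in> E" "{v, z} \<in> E" "{v, u} \<in> E"
    "{v, r} \<in> E" "{p, y} \<in> E" "{q, z} \<in> E" "{v, s} \<in> E"
    using configuration_edges by (simp_all add: recoloured_edges_def)
  then show ?thesis by (auto dest: simple_graph_edgeD[OF simple])
qed

lemma vs_not_recoloured: "{v, s} \<notin> recoloured_edges"
  using distinct outside by (auto simp: recoloured_edges_def doubleton_eq_iff)

lemma incident_recoloured:
  "incident E x \<inter> recoloured_edges = {{v, x}, {x, t}}"
  "incident E w \<inter> recoloured_edges = {{v, w}, {t, w}, {w, y}}"
  "incident E p \<inter> recoloured_edges = {{p, y}, {p, z}}"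
  "incident E q \<inter> recoloured_edges = {{q, z}, {q, u}}"
  "incident E r \<inter> recoloured_edges = {{v, r}, {u, r}}"
  "c \<notin> {v, x, t, w, y, z, u, r, p, q} \<Longrightarrow> incident E c \<inter> recoloured_edges = {}"
  using configuration_edges distinct outside
  by (auto simp: incident_def recoloured_edges_def)

lemma degree_three_vertices: "\<forall>a\<in>{t, y, z, u}. 2 * degree E a < 9"
proof -
  have "2 * card {a, b, c} < 9" for a b c :: "'a set" using card_length[of "[a, b, c]"] by simp
  then show ?thesis
    by (simp add: degree_eq_card_incident incident_t incident_y incident_z incident_u)
qed

end

locale coloured_configuration = configuration +
  fixes f :: "'a \<Rightarrow> nat" and g :: "'a set \<Rightarrow> nat"
  assumes old_colouring: "total_coloring_except V (E - {{v, z}}) {} 9 f g"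
begin

lemma old_colours_distinct:
  assumes "c \<in> V" and "set es \<subseteq> incident (E - {{v, z}}) c" and "distinct es"
  shows "distinct (f c # map g es)"
proof -
  have "inj_on g (incident (E - {{v, z}}) c)" and "f c \<notin> g ` incident (E - {{v, z}}) c"
    using old_colouring assms(1) by (auto simp: total_coloring_except_def)
  then show ?thesis
    using assms(2,3) by (auto simp: distinct_map intro: inj_on_subset)
qed

lemma old_colour_constraints:
  "distinct [f v, g {v, x}, g {v, t}, g {v, w}, g {v, y}, g {v, u}, g {v, r}, g {v, s}]"
  "g {v, x} \<noteq> g {x, t}" "distinct [g {v, t}, g {x, t}, g {t, w}]"
  "distinct [g {v, w}, g {t, w}, g {w, y}]" "distinct [g {v, y}, g {w, y}, g {p, y}]"
  "g {p, y} \<noteq> g {p, z}" "g {p, z} \<noteq> g {q, z}" "g {q, z} \<noteq> g {q, u}"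
  "distinct [g {v, u}, g {q, u}, g {u, r}]" "g {v, r} \<noteq> g {u, r}"
proof -
  have at: "distinct (map g es)"
    if "c \<in> V" "set es \<subseteq> insert {v, s} recoloured_edges" "distinct es" "\<forall>e\<in>set es. c \<in> e \<and> e \<noteq> {v, z}"
    for c es
    using old_colours_distinct[of c es] that configuration_edges by (auto simp: incident_def)
  show "distinct [f v, g {v, x}, g {v, t}, g {v, w}, g {v, y}, g {v, u}, g {v, r}, g {v, s}]"
    using old_colours_distinct[of v "[{v, x}, {v, t}, {v, w}, {v, y}, {v, u}, {v, r}, {v, s}]"]
      configuration_vertices configuration_edges distinct outside
    by (auto simp: incident_def recoloured_edges_def doubleton_eq_iff)
  show "g {v, x} \<noteq> g {x, t}"
    using at[of x "[{v, x}, {x, t}]"] configuration_vertices distinct outside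
    by (auto simp: recoloured_edges_def doubleton_eq_iff)
  show "distinct [g {v, t}, g {x, t}, g {t, w}]"
    using at[of t "[{v, t}, {x, t}, {t, w}]"] configuration_vertices distinct outside
    by (auto simp: recoloured_edges_def doubleton_eq_iff)
  show "distinct [g {v, w}, g {t, w}, g {w, y}]"
    using at[of w "[{v, w}, {t, w}, {w, y}]"] configuration_vertices distinct outside
    by (auto simp: recoloured_edges_def doubleton_eq_iff)
  show "distinct [g {v, y}, g {w, y}, g {p, y}]"
    using at[of y "[{v, y}, {w, y}, {p, y}]"] configuration_vertices distinct outside
    by (auto simp: recoloured_edges_def doubleton_eq_iff)
  show "g {p, y} \<noteq> g {p, z}"
    using at[of p "[{p, y}, {p, z}]"] configuration_vertices distinct outside
    by (auto simp: recoloured_edges_def doubleton_eq_iff)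
  show "g {p, z} \<noteq> g {q, z}"
    using at[of z "[{p, z}, {q, z}]"] configuration_vertices distinct outside
    by (auto simp: recoloured_edges_def doubleton_eq_iff)
  show "g {q, z} \<noteq> g {q, u}"
    using at[of q "[{q, z}, {q, u}]"] configuration_vertices distinct outside
    by (auto simp: recoloured_edges_def doubleton_eq_iff)
  show "distinct [g {v, u}, g {q, u}, g {u, r}]"
    using at[of u "[{v, u}, {q, u}, {u, r}]"] configuration_vertices distinct outside
    by (auto simp: recoloured_edges_def doubleton_eq_iff)
  show "g {v, r} \<noteq> g {u, r}"
    using at[of r "[{v, r}, {u, r}]"] configuration_vertices distinct outside
    by (auto simp: recoloured_edges_def doubleton_eq_iff)
qed

(* At x, w, p, q and r the recoloured edges only permute their old colours, so these
   vertices and their other edges need no change; t, y, z and u are left uncoloured and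
   only need distinct colours on their three edges. *)
definition admissible_recolouring :: "('a set \<Rightarrow> nat) \<Rightarrow> bool" where
  "admissible_recolouring g' \<longleftrightarrow>
     (\<forall>e. e \<notin> recoloured_edges \<longrightarrow> g' e = g e) \<and> g' ` recoloured_edges \<subseteq> {1..9} \<and>
     distinct (f v # map g' [{v, s}, {v, x}, {v, t}, {v, w}, {v, y}, {v, z}, {v, u}, {v, r}]) \<and>
     distinct (map g' [{v, t}, {x, t}, {t, w}]) \<and> distinct (map g' [{v, y}, {w, y}, {p, y}]) \<and>
     distinct (map g' [{v, z}, {p, z}, {q, z}]) \<and> distinct (map g' [{v, u}, {q, u}, {u, r}]) \<and>
     g' ` {{v, x}, {x, t}} = g ` {{v, x}, {x, t}} \<and>
     g' ` {{v, w}, {t, w}, {w, y}} = g ` {{v, w}, {t, w}, {w, y}} \<and>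
     g' ` {{p, y}, {p, z}} = g ` {{p, y}, {p, z}} \<and> g' ` {{q, z}, {q, u}} = g ` {{q, z}, {q, u}} \<and>
     g' ` {{v, r}, {u, r}} = g ` {{v, r}, {u, r}}"

lemma admissible_recolouringD:
  assumes "admissible_recolouring g'"
  shows admissible_outside: "\<forall>e. e \<notin> recoloured_edges \<longrightarrow> g' e = g e"
    and admissible_range: "g' ` recoloured_edges \<subseteq> {1..9}"
    and admissible_at_v: "distinct (f v # map g' [{v, s}, {v, x}, {v, t}, {v, w}, {v, y}, {v, z}, {v, u}, {v, r}])"
    and admissible_at_degree_3: "distinct (map g' [{v, t}, {x, t}, {t, w}])"
      "distinct (map g' [{v, y}, {w, y}, {p, y}])" "distinct (map g' [{v, z}, {p, z}, {q, z}])"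
      "distinct (map g' [{v, u}, {q, u}, {u, r}])"
    and admissible_permutes: "g' ` {{v, x}, {x, t}} = g ` {{v, x}, {x, t}}"
      "g' ` {{v, w}, {t, w}, {w, y}} = g ` {{v, w}, {t, w}, {w, y}}"
      "g' ` {{p, y}, {p, z}} = g ` {{p, y}, {p, z}}" "g' ` {{q, z}, {q, u}} = g ` {{q, z}, {q, u}}"
      "g' ` {{v, r}, {u, r}} = g ` {{v, r}, {u, r}}"
  using assms unfolding admissible_recolouring_def by simp_all

lemma old_colours_range:
  "{g {v, x}, g {v, t}, g {v, w}, g {v, y}, g {v, u}, g {v, r}, g {x, t}, g {t, w}, g {w, y},
    g {p, y}, g {p, z}, g {q, z}, g {q, u}, g {u, r}} \<subseteq> {1..9}"
proof -
  let ?old = "{{v, x}, {v, t}, {v, w}, {v, y}, {v, u}, {v, r}, {x, t}, {t, w}, {w, y},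
    {p, y}, {p, z}, {q, z}, {q, u}, {u, r}}"
  have "?old \<subseteq> E" using configuration_edges by (simp add: recoloured_edges_def)
  moreover have "{v, z} \<notin> ?old" using distinct outside by (auto simp: doubleton_eq_iff)
  ultimately have "?old \<subseteq> E - {{v, z}}" by (metis Diff_empty subset_Diff_insert)
  moreover have "g ` (E - {{v, z}}) \<subseteq> {1..9}"
    using old_colouring by (auto simp: total_coloring_except_def)
  ultimately have "g ` ?old \<subseteq> {1..9}" by (meson image_mono order_trans)
  then show ?thesis by simp
qed

lemma admissible_recolouring_exists: "\<exists>g'. admissible_recolouring g'"
proof -
  note old = old_colour_constraints
  let ?at_v = "[f v, g {v, x}, g {v, t}, g {v, w}, g {v, y}, g {v, u}, g {v, r}, g {v, s}]"
  have "card (set ?at_v) < 9" using card_length[of ?at_v] by simp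
  then obtain \<alpha> where \<alpha>: "\<alpha> \<in> {1..9}" "\<alpha> \<notin> set ?at_v"
    using exists_colour_not_in by blast
  with old(1) have "distinct (\<alpha> # ?at_v)" by simp
  from recolouring_at_degree_8_vertex[OF this old(2-)]
  obtain Vx Vt Vw Vy Vz Vu Vr Tx Tw Yw Yp Zp Zq Uq Ur where new:
    "distinct [f v, g {v, s}, Vx, Vt, Vw, Vy, Vz, Vu, Vr]" "distinct [Vt, Tx, Tw]" "distinct [Vy, Yw, Yp]"
    "distinct [Vz, Zp, Zq]" "distinct [Vu, Uq, Ur]" "{Vx, Tx} = {g {v, x}, g {x, t}}"
    "{Vw, Tw, Yw} = {g {v, w}, g {t, w}, g {w, y}}" "{Yp, Zp} = {g {p, y}, g {p, z}}"
    "{Zq, Uq} = {g {q, z}, g {q, u}}" "{Vr, Ur} = {g {v, r}, g {u, r}}"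
    "{Vt, Vy, Vz, Vu} \<subseteq> {\<alpha>, g {v, x}, g {v, t}, g {v, w}, g {v, y}, g {v, u}, g {v, r}}"
    by (elim exE conjE) blast
  define g' where "g' e =
    (if e \<notin> recoloured_edges then g e
     else if e = {v, x} then Vx else if e = {v, t} then Vt else if e = {v, w} then Vw
     else if e = {v, y} then Vy else if e = {v, z} then Vz else if e = {v, u} then Vu
     else if e = {v, r} then Vr else if e = {x, t} then Tx else if e = {t, w} then Tw
     else if e = {w, y} then Yw else if e = {p, y} then Yp else if e = {p, z} then Zp
     else if e = {q, z} then Zq else if e = {q, u} then Uq else Ur)" for e
  have g'_outside: "g' e = g e" if "e \<notin> recoloured_edges" for e
    using that by (simp add: g'_def)
  have g'_new: "g' {v, x} = Vx" "g' {v, t} = Vt" "g' {v, w} = Vw" "g' {v, y} = Vy" "g' {v, z} = Vz"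
    "g' {v, u} = Vu" "g' {v, r} = Vr" "g' {x, t} = Tx" "g' {t, w} = Tw" "g' {w, y} = Yw"
    "g' {p, y} = Yp" "g' {p, z} = Zp" "g' {q, z} = Zq" "g' {q, u} = Uq" "g' {u, r} = Ur"
    using distinct outside by (auto simp: g'_def recoloured_edges_def doubleton_eq_iff)
  have "{Vx, Tx} \<union> {Vw, Tw, Yw} \<union> {Yp, Zp} \<union> {Zq, Uq} \<union> {Vr, Ur} \<union> {Vt, Vy, Vz, Vu} \<subseteq> {1..9}"
    unfolding new(6-10) using new(11) \<alpha>(1) old_colours_range by auto
  then have "g' ` recoloured_edges \<subseteq> {1..9}" by (simp add: recoloured_edges_def g'_new)
  then have "admissible_recolouring g'"
    unfolding admissible_recolouring_def
    using new g'_outside g'_outside[OF vs_not_recoloured] by (simp add: g'_new)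
  then show ?thesis by blast
qed

lemma admissible_recolouring_preserves_colours:
  assumes "admissible_recolouring g'" and "c \<notin> {v, t, y, z, u}"
  shows "g' ` incident E c = g ` incident E c"
proof (rule image_eq_if_eq_outside)
  show "\<forall>e\<in>incident E c - recoloured_edges. g' e = g e"
    using admissible_outside[OF assms(1)] by blast
  show "g' ` (incident E c \<inter> recoloured_edges) = g ` (incident E c \<inter> recoloured_edges)"
  proof (cases "c \<in> {x, w, p, q, r}")
    case True
    then show ?thesis
      using incident_recoloured(1-5) admissible_permutes[OF assms(1)] by (elim insertE emptyE) simp_all
  next
    case False
    then show ?thesis using assms(2) incident_recoloured(6)[of c] by simp
  qed
qed

lemma admissible_recolouring_proper_at:
  assumes "admissible_recolouring g'" and "c \<in> V"
  shows "inj_on g' (incident E c)" and "c \<notin> {t, y, z, u} \<Longrightarrow> f c \<notin> g' ` incident E c"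
proof -
  have v: "inj_on g' (incident E v)" "f v \<notin> g' ` incident E v"
    using admissible_at_v[OF assms(1)] unfolding incident_v
    by (simp_all only: distinct.simps(2) set_map distinct_map list.set simp_thms)
  have deg3: "inj_on g' (incident E t)" "inj_on g' (incident E y)" "inj_on g' (incident E z)"
    "inj_on g' (incident E u)"
    using admissible_at_degree_3[OF assms(1), THEN inj_on_if_distinct_map]
    unfolding incident_t incident_y incident_z incident_u by (simp_all only: list.set)
  have "inj_on g' (incident E c) \<and> (c \<notin> {t, y, z, u} \<longrightarrow> f c \<notin> g' ` incident E c)"
  proof (cases "c \<in> {v, t, y, z, u}")
    case True
    then show ?thesis using v deg3 by auto
  next
    case False
    then have "c \<notin> {v, z}" by auto
    then have old: "inj_on g (incident E c)" "f c \<notin> g ` incident E c"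
      using old_colouring assms(2) incident_Diff_edge[of c "{v, z}" E]
      by (auto simp: total_coloring_except_def)
    have "finite (incident E c)"
      using simple_graph_finite_edges[OF simple] by (simp add: incident_def)
    then show ?thesis
      using inj_on_if_image_eq old admissible_recolouring_preserves_colours[OF assms(1) False] by metis
  qed
  then show "inj_on g' (incident E c)" and "c \<notin> {t, y, z, u} \<Longrightarrow> f c \<notin> g' ` incident E c"
    by simp_all
qed

lemma admissible_recolouring_colouring:
  assumes "admissible_recolouring g'"
  shows "total_coloring_except V E {t, y, z, u} 9 f g'"
  unfolding total_coloring_except_def
proof (intro conjI ballI impI)
  fix a assume "a \<in> V - {t, y, z, u}"
  then show "f a \<in> {1..9}" using old_colouring by (simp add: total_coloring_except_def)
next
  fix e assume "e \<in> E"
  show "g' e \<in> {1..9}"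
  proof (cases "e \<in> recoloured_edges")
    case True
    then show ?thesis using admissible_range[OF assms] by blast
  next
    case False
    then have "e \<in> E - {{v, z}}" using \<open>e \<in> E\<close> by (auto simp: recoloured_edges_def)
    then show ?thesis
      using False admissible_outside[OF assms] old_colouring by (simp add: total_coloring_except_def)
  qed
next
  fix a b assume ab: "a \<in> V - {t, y, z, u}" "b \<in> V - {t, y, z, u}" "{a, b} \<in> E"
  then have "{a, b} \<in> E - {{v, z}}" by (auto simp: doubleton_eq_iff)
  then show "f a \<noteq> f b" using ab old_colouring by (simp add: total_coloring_except_def)
next
  fix c assume "c \<in> V"
  then show "inj_on g' (incident E c)" by (rule admissible_recolouring_proper_at(1)[OF assms])
next
  fix c assume "c \<in> V - {t, y, z, u}"
  then show "f c \<notin> g' ` incident E c" using admissible_recolouring_proper_at(2)[OF assms] by blast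
qed

end

lemma (in configuration) total_colorable_if_colorable_without_edge:
  assumes "total_colorable V (E - {{v, z}}) 9"
  shows "total_colorable V E 9"
proof -
  obtain f g where "total_coloring V (E - {{v, z}}) 9 f g"
    using assms by (auto simp: total_colorable_def)
  then have "total_coloring_except V (E - {{v, z}}) {} 9 f g"
    using total_coloring_iff_except_empty simple_graph_mono[OF simple] by blast
  then interpret coloured_configuration V E v x t w y z u r p q s f g
    by unfold_locales
  obtain g' where "admissible_recolouring g'" using admissible_recolouring_exists by blast
  then have "total_coloring_except V E {t, y, z, u} 9 f g'" by (rule admissible_recolouring_colouring)
  then obtain f' where "total_coloring_except V E {} 9 f' g'"
    using total_coloring_except_colour_vertices[OF simple] configuration_vertices degree_three_vertices
    by (metis finite.emptyI finite.insertI insert_subset)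
  then show ?thesis
    using total_coloring_iff_except_empty[OF simple] by (auto simp: total_colorable_def)
qed

lemma no_reducible_configuration:
  assumes mc: "minimal_counterexample V E" and "v \<in> V" and dv: "degree E v = 8"
    and dist: "distinct [x, t, w, y, z, u, r]"
    and "adj E v x" "adj E v t" "adj E v w" "adj E v y" "adj E v z" "adj E v u" "adj E v r"
    and "p \<in> V" "q \<in> V" "p \<noteq> q" "p \<notin> {v, x, t, w, y, z, u, r}" "q \<notin> {v, x, t, w, y, z, u, r}"
    and "adj E x t" "adj E t w" "adj E w y" "adj E u r"
    and "adj E p y" "adj E p z" "adj E q z" "adj E q u"
    and dt: "degree E t = 3" and dy: "degree E y = 3" and dz: "degree E z = 3" and du: "degree E u = 3"
  shows False
proof -
  have sg: "simple_graph V E" and not_colorable: "\<not> total_colorable V E 9"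
    using mc by (auto simp: minimal_counterexample_def)
  note edges = assms(5-11,17-24)[unfolded adj_def]
  have "v \<notin> {x, t, w, y, z, u, r}" using simple_graph_edgeD[OF sg] edges(1-7) by blast
  with dist have dist_v: "distinct [v, x, t, w, y, z, u, r]" by simp
  let ?A = "{{v, x}, {v, t}, {v, w}, {v, y}, {v, z}, {v, u}, {v, r}}"
  have A: "?A \<subseteq> incident E v" using edges by (simp add: incident_def)
  have "card ?A = 7" using dist_v by (simp add: doubleton_eq_iff)
  then have "degree E v = Suc (card ?A)" using dv by simp
  from incident_eq_insert_edge[OF sg A this]
  obtain s where s: "s \<noteq> v" "{v, s} \<notin> ?A" "incident E v = insert {v, s} ?A"
    by (elim bexE conjE) (rule that; assumption)
  have incident_degree_3: "incident E c = {e1, e2, e3}"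
    if "degree E c = 3" "{e1, e2, e3} \<subseteq> E" "c \<in> e1" "c \<in> e2" "c \<in> e3" "distinct [e1, e2, e3]"
    for c e1 e2 e3
    using incident_eq_if_card_eq[OF simple_graph_finite_edges[OF sg], of "{e1, e2, e3}" c] that
    by (auto simp: incident_def)
  interpret configuration V E v x t w y z u r p q s
  proof
    show "incident E v = {{v, s}, {v, x}, {v, t}, {v, w}, {v, y}, {v, z}, {v, u}, {v, r}}"
      by (rule s(3))
    show "s \<notin> {v, x, t, w, y, z, u, r}" using s(1,2) by auto
    show "incident E t = {{v, t}, {x, t}, {t, w}}"
      by (rule incident_degree_3[OF dt]) (use edges dist_v in \<open>auto simp: doubleton_eq_iff\<close>)
    show "incident E y = {{v, y}, {w, y}, {p, y}}"
      by (rule incident_degree_3[OF dy]) (use edges dist_v assms(15) in \<open>auto simp: doubleton_eq_iff\<close>)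
    show "incident E z = {{v, z}, {p, z}, {q, z}}"
      by (rule incident_degree_3[OF dz]) (use edges dist_v assms(14-16) in \<open>auto simp: doubleton_eq_iff\<close>)
    show "incident E u = {{v, u}, {q, u}, {u, r}}"
      by (rule incident_degree_3[OF du]) (use edges dist_v assms(16) in \<open>auto simp: doubleton_eq_iff\<close>)
  qed (use sg dist_v assms(14-16) in auto)
  have "total_colorable V (E - {{v, z}}) 9"
    using minimal_counterexample_subgraph_colorable[OF mc] edges(5) by blast
  then show False using total_colorable_if_colorable_without_edge not_colorable by blast
qed

theorem lemma2p11:
  fixes V :: "'a set" and E :: "'a set set"
  assumes "minimal_counterexample V E"
  shows "\<not> (\<exists>v x t w y z u r p q.
            v \<in> V \<and> degree E v = 8 \<and>
            distinct [x, t, w, y, z, u, r] \<and>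
            adj E v x \<and> adj E v t \<and> adj E v w \<and> adj E v y \<and> adj E v z \<and> adj E v u \<and> adj E v r \<and>
            p \<in> V \<and> q \<in> V \<and> p \<noteq> q \<and>
            p \<notin> {v, x, t, w, y, z, u, r} \<and> q \<notin> {v, x, t, w, y, z, u, r} \<and>
            adj E x t \<and> adj E t w \<and> adj E w y \<and> adj E u r \<and>
            adj E p y \<and> adj E p z \<and> adj E q z \<and> adj E q u \<and>
            degree E t = 3 \<and> degree E y = 3 \<and> degree E z = 3 \<and> degree E u = 3)"
proof (intro notI, elim exE conjE, goal_cases)
  case (1 v x t w y z u r p q)
  then show ?case by (rule no_reducible_configuration[OF assms])
qed

end
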